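(* Let $k\neq0$ be an integer and $r=[2,2k,-2,-2]$. Then: (1) if $k<0$, every zero of $\Delta_{K(r)}(t)$ is real or of modulus $1$, and both real zeros and non-real zeros of modulus $1$ occur; (2) if $k\in\{1,2,3\}$, no zero of $\Delta_{K(r)}(t)$ is real or of modulus $1$; (3) if $k\ge4$, all zeros of $\Delta_{K(r)}(t)$ have modulus $1$.
   Context: For a finite sequence $r=[2a_1,2a_2,\dots,2a_n]$ of nonzero even integers, $K(r)$ denotes the 2-bridge knot or link whose associated rational number has the even continued fraction expansion $1/(2a_1-1/(2a_2-\cdots-1/(2a_n)))$. Let $M(r)$ be the $n\times n$ integer matrix whose $(k,k)$-entry is $a_k$, whose $(k,k+1)$-entry is $1$ ($1\le k\le n-1$), and whose other entries are $0$; $\Delta_{K(r)}(t)=\det(tM(r)-M(r)^T)$ is the (reduced) Alexander polynomial of $K(r)$ (up to sign). *)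

theory Defs
  imports "HOL-Computational_Algebra.Polynomial" "Jordan_Normal_Form.Determinant"
begin

definition seifert_mat :: "int list \<Rightarrow> int mat" where
  "seifert_mat r = mat (length r) (length r)
     (\<lambda>(i,j). if i = j then r ! i div 2 else if j = i + 1 then 1 else 0)"

text \<open>Alexander polynomial det(t M(r) - M(r)^T) as an integer polynomial in t.\<close>
definition alexander_poly :: "int list \<Rightarrow> int poly" where
  "alexander_poly r = det (mat (length r) (length r)
     (\<lambda>(i,j). [:0, seifert_mat r $$ (i,j):] - [:seifert_mat r $$ (j,i):]))"

definition complex_zeros :: "int poly \<Rightarrow> complex set" where
  "complex_zeros p = {z. poly (map_poly of_int p) z = 0}"

end

theory Submission
  imports Defs
begin

text \<open>Here \<open>\<Delta>(t) = k(t-1)^4 + k t (t-1)^2 + t^2\<close>. Dividing by \<open>t^2\<close> and substituting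
  \<open>s = (t-1)^2/t = t + 1/t - 2\<close> leaves the quadratic \<open>k s^2 + k s + 1\<close>, whose roots are real
  exactly when \<open>4k \<le> k^2\<close>. On the other hand \<open>t + 1/t\<close> is real exactly when \<open>t\<close> is real or
  \<open>|t| = 1\<close>. For \<open>k > 0\<close> the quartic is positive on the real line, and for \<open>k < 0\<close> the
  intermediate value theorem produces a real zero and a zero on the unit circle.\<close>

lemma det_mat_Suc:
  "det (mat (Suc n) (Suc n) f) =
     (\<Sum>i<Suc n. f (i, 0) * ((-1) ^ i *
        det (mat n n (\<lambda>(i', j'). f (if i' < i then i' else Suc i', Suc j')))))"
proof -
  have "det (mat (Suc n) (Suc n) f) =
      (\<Sum>i<Suc n. mat (Suc n) (Suc n) f $$ (i, 0) * cofactor (mat (Suc n) (Suc n) f) i 0)"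
    by (rule laplace_expansion_column) auto
  also have "\<dots> = (\<Sum>i<Suc n. f (i, 0) * ((-1) ^ i *
      det (mat n n (\<lambda>(i', j'). f (if i' < i then i' else Suc i', Suc j')))))"
  proof (rule sum.cong[OF refl])
    fix i assume "i \<in> {..<Suc n}"
    have "mat_delete (mat (Suc n) (Suc n) f) i 0 =
        mat n n (\<lambda>(i', j'). f (if i' < i then i' else Suc i', Suc j'))"
      by (rule eq_matI) (auto simp: mat_delete_def)
    then show "mat (Suc n) (Suc n) f $$ (i, 0) * cofactor (mat (Suc n) (Suc n) f) i 0 =
        f (i, 0) * ((-1) ^ i * det (mat n n (\<lambda>(i', j'). f (if i' < i then i' else Suc i', Suc j'))))"
      using \<open>i \<in> {..<Suc n}\<close> by (simp add: cofactor_def)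
  qed
  finally show ?thesis .
qed

lemma alexander_poly_2_2k_m2_m2:
  "alexander_poly [2, 2*k, -2, -2] = [:k, -3*k, 4*k + 1, -3*k, k:]"
  unfolding alexander_poly_def seifert_mat_def
  by (simp add: det_mat_Suc numeral_eq_Suc lessThan_Suc)

lemma complex_zeros_alexander_poly_2_2k_m2_m2:
  "z \<in> complex_zeros (alexander_poly [2, 2*k, -2, -2]) \<longleftrightarrow>
     of_int k * (z - 1)^4 + of_int k * z * (z - 1)^2 + z^2 = 0"
proof -
  have "poly (map_poly of_int (alexander_poly [2, 2*k, -2, -2])) z =
      of_int k * (z - 1)^4 + of_int k * z * (z - 1)^2 + z^2"
    unfolding alexander_poly_2_2k_m2_m2
    by (simp add: map_poly_pCons algebra_simps power2_eq_square power4_eq_xxxx)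
  then show ?thesis unfolding complex_zeros_def by simp
qed

lemma quartic_eq_square_mult_quadratic:
  fixes K z :: "'a :: field"
  assumes "z \<noteq> 0"
  defines "s \<equiv> (z - 1)^2 / z"
  shows "K * (z - 1)^4 + K * z * (z - 1)^2 + z^2 = z^2 * (K * s^2 + K * s + 1)"
  using assms by (simp add: field_simps power2_eq_square power4_eq_xxxx)

lemma square_sub_one_div_eq:
  fixes z :: "'a :: field"
  assumes "z \<noteq> 0"
  shows "(z - 1)^2 / z = z + inverse z - 2"
  using assms by (simp add: field_simps power2_eq_square)

lemma add_inverse_Reals_iff:
  fixes z :: complex
  assumes "z \<noteq> 0"
  shows "z + inverse z \<in> \<real> \<longleftrightarrow> z \<in> \<real> \<or> cmod z = 1"
proof -
  have "Im (z + inverse z) = Im z * (1 - 1 / (Re z ^ 2 + Im z ^ 2))"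
    by (simp add: algebra_simps)
  moreover have "Re z ^ 2 + Im z ^ 2 = 1 \<longleftrightarrow> cmod z = 1"
    by (simp add: cmod_def)
  moreover have "Re z ^ 2 + Im z ^ 2 \<noteq> 0"
    using assms by (simp add: complex_eq_iff)
  ultimately show ?thesis
    by (auto simp: complex_is_Real_iff)
qed

lemma square_eq_nonneg_real_imp_Reals:
  fixes q :: complex
  assumes "q^2 = of_real D" and "D \<ge> 0"
  shows "q \<in> \<real>"
proof -
  define a where "a = complex_of_real (sqrt D)"
  have "(q - a) * (q + a) = q^2 - a^2"
    by (simp add: algebra_simps power2_eq_square)
  also have "\<dots> = 0"
    using assms by (simp add: a_def flip: of_real_power)
  finally have "q = a \<or> q = -a"
    by (auto simp: add_eq_0_iff2)
  then show ?thesis unfolding a_def by auto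
qed

text \<open>The discriminant of \<open>K s^2 + K s + 1\<close> is \<open>K^2 - 4K\<close>.\<close>

lemma quadratic_root_Reals_iff:
  fixes s :: complex
  assumes root: "of_real K * s^2 + of_real K * s + 1 = 0"
  shows "s \<in> \<real> \<longleftrightarrow> 4 * K \<le> K^2"
proof -
  have "K \<noteq> 0" using root by auto
  have "(2 * of_real K * s + of_real K)^2 =
      4 * of_real K * (of_real K * s^2 + of_real K * s + 1) + (of_real K)^2 - 4 * of_real K"
    by (simp add: algebra_simps power2_eq_square)
  also have "\<dots> = of_real (K^2 - 4 * K)" using root by simp
  finally have disc: "(2 * of_real K * s + of_real K)^2 = of_real (K^2 - 4 * K)" .
  show ?thesis
  proof
    assume "s \<in> \<real>"
    then obtain x where "s = of_real x" by (auto elim: Reals_cases)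
    then have "of_real ((2 * K * x + K)^2) = complex_of_real (K^2 - 4 * K)"
      using disc by simp
    then have "(2 * K * x + K)^2 = K^2 - 4 * K" by (simp only: of_real_eq_iff)
    then show "4 * K \<le> K^2" by (metis diff_ge_0_iff_ge zero_le_power2)
  next
    assume "4 * K \<le> K^2"
    then have "2 * of_real K * s + of_real K \<in> \<real>"
      by (intro square_eq_nonneg_real_imp_Reals[OF disc]) simp
    then have "(2 * of_real K * s + of_real K - of_real K) / (2 * of_real K) \<in> \<real>"
      by (intro Reals_divide Reals_diff) auto
    then show "s \<in> \<real>" using \<open>K \<noteq> 0\<close> by simp
  qed
qed

lemma quartic_root_real_or_unit_iff:
  fixes z :: complex
  assumes "K \<noteq> 0"
    and root: "of_real K * (z - 1)^4 + of_real K * z * (z - 1)^2 + z^2 = 0"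
  shows "z \<in> \<real> \<or> cmod z = 1 \<longleftrightarrow> 4 * K \<le> K^2"
proof -
  have "z \<noteq> 0" using root \<open>K \<noteq> 0\<close> by auto
  define s where "s = (z - 1)^2 / z"
  have "z^2 * (of_real K * s^2 + of_real K * s + 1) = 0"
    using root quartic_eq_square_mult_quadratic[OF \<open>z \<noteq> 0\<close>] unfolding s_def by simp
  then have quadratic: "of_real K * s^2 + of_real K * s + 1 = 0"
    using \<open>z \<noteq> 0\<close> by simp
  have "z + inverse z = s + 2"
    using square_sub_one_div_eq[OF \<open>z \<noteq> 0\<close>] by (simp add: s_def)
  then have "z \<in> \<real> \<or> cmod z = 1 \<longleftrightarrow> s + 2 \<in> \<real>"
    using add_inverse_Reals_iff[OF \<open>z \<noteq> 0\<close>] by simp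
  also have "\<dots> \<longleftrightarrow> s \<in> \<real>"
    by (simp add: complex_is_Real_iff)
  finally show ?thesis using quadratic_root_Reals_iff[OF quadratic] by simp
qed

lemma quartic_pos_real:
  fixes K x :: real
  assumes "K > 0"
  shows "K * (x - 1)^4 + K * x * (x - 1)^2 + x^2 > 0"
proof -
  have "K * (x - 1)^4 + K * x * (x - 1)^2 + x^2 = K * ((x - 1)^2 * ((x - 1/2)^2 + 3/4)) + x^2"
    by (simp add: power2_eq_square power4_eq_xxxx algebra_simps)
  moreover have "K * ((x - 1)^2 * ((x - 1/2)^2 + 3/4)) \<ge> 0"
    using assms by simp
  moreover have "K * ((x - 1)^2 * ((x - 1/2)^2 + 3/4)) > 0 \<or> x^2 > 0"
    using assms by (cases "x = 0") (auto simp: power2_eq_square)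
  ultimately show ?thesis by (smt (verit) zero_le_power2)
qed

lemma quartic_no_real_root:
  fixes z :: complex
  assumes "K > 0" and "z \<in> \<real>"
  shows "of_real K * (z - 1)^4 + of_real K * z * (z - 1)^2 + z^2 \<noteq> 0"
proof -
  obtain x where x: "z = of_real x" using assms(2) by (auto elim: Reals_cases)
  have "of_real K * (z - 1)^4 + of_real K * z * (z - 1)^2 + z^2 =
      of_real (K * (x - 1)^4 + K * x * (x - 1)^2 + x^2)"
    by (simp add: x)
  then show ?thesis
    using quartic_pos_real[OF assms(1), of x] by (metis of_real_eq_0_iff order_less_irrefl)
qed

lemma quartic_real_root_exists:
  assumes "K < 0"
  shows "\<exists>z::complex\<in>\<real>. of_real K * (z - 1)^4 + of_real K * z * (z - 1)^2 + z^2 = 0"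
proof -
  define g where "g x = K * (x - 1)^4 + K * x * (x - 1)^2 + x^2" for x :: real
  have "continuous_on {0..1} g"
    unfolding g_def by (intro continuous_intros)
  moreover have "g 0 \<le> 0" "0 \<le> g 1"
    using assms by (simp_all add: g_def)
  ultimately obtain x where "g x = 0"
    using IVT'[of g 0 0 1] by auto
  then have "K * (x - 1)^4 + K * x * (x - 1)^2 + x^2 = 0"
    by (simp add: g_def)
  then have "of_real (K * (x - 1)^4 + K * x * (x - 1)^2 + x^2) = (0 :: complex)"
    by (simp only: of_real_0)
  then have "of_real K * (of_real x - 1)^4 + of_real K * of_real x * (of_real x - 1)^2
      + (of_real x)^2 = (0 :: complex)"
    by simp
  then show ?thesis by (intro bexI[of _ "of_real x"]) auto
qed

text \<open>On the unit circle \<open>s = 2 Re z - 2\<close>, so it suffices to find a root \<open>s = 2c - 2\<close> of the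
  quadratic with \<open>|c| < 1\<close>; the sign change between \<open>c = -1\<close> and \<open>c = 1\<close> needs \<open>12K + 1 < 0\<close>.\<close>

lemma quartic_unit_root_exists:
  assumes "K \<le> -1"
  shows "\<exists>z. z \<notin> \<real> \<and> cmod z = 1 \<and>
           of_real K * (z - 1)^4 + of_real K * z * (z - 1)^2 + z^2 = 0"
proof -
  define h where "h c = K * (2*c - 2)^2 + K * (2*c - 2) + 1" for c :: real
  have "continuous_on {-1..1} h"
    unfolding h_def by (intro continuous_intros)
  moreover have "h (-1) \<le> 0" "0 \<le> h 1"
    using assms by (simp_all add: h_def)
  ultimately obtain c where c: "-1 \<le> c" "c \<le> 1" "h c = 0"
    using IVT'[of h "-1" 0 1] by auto
  have "c \<noteq> 1" "c \<noteq> -1" using c assms by (auto simp: h_def)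
  then have "c^2 < 1" using c by (simp add: abs_square_less_1)
  define z where "z = Complex c (sqrt (1 - c^2))"
  have unit: "cmod z = 1" using \<open>c^2 < 1\<close> by (simp add: z_def cmod_def)
  have "z \<notin> \<real>" using \<open>c^2 < 1\<close> by (simp add: z_def complex_is_Real_iff)
  then have "z \<noteq> 0" by auto
  have "inverse z = cnj z"
    using unit by (intro inverse_unique) (simp add: complex_mult_cnj cmod_def flip: of_real_power)
  then have s: "(z - 1)^2 / z = of_real (2*c - 2)"
    using square_sub_one_div_eq[OF \<open>z \<noteq> 0\<close>] by (simp add: z_def complex_eq_iff)
  have "of_real K * (z - 1)^4 + of_real K * z * (z - 1)^2 + z^2 = z^2 * of_real (h c)"
    using quartic_eq_square_mult_quadratic[OF \<open>z \<noteq> 0\<close>, of "of_real K"]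
    unfolding s by (simp add: h_def)
  then show ?thesis using \<open>z \<notin> \<real>\<close> unit c by auto
qed

theorem proposition12p2:
  fixes k :: int
  assumes "k \<noteq> 0"
  defines "Z \<equiv> complex_zeros (alexander_poly [2, 2*k, -2, -2])"
  shows "(k < 0 \<longrightarrow>
            (\<forall>z\<in>Z. z \<in> \<real> \<or> cmod z = 1) \<and>
            (\<exists>z\<in>Z. z \<in> \<real>) \<and>
            (\<exists>z\<in>Z. z \<notin> \<real> \<and> cmod z = 1))
       \<and> (k \<in> {1, 2, 3} \<longrightarrow> (\<forall>z\<in>Z. z \<notin> \<real> \<and> cmod z \<noteq> 1))
       \<and> (4 \<le> k \<longrightarrow> (\<forall>z\<in>Z. cmod z = 1))"
proof -
  define K where "K = real_of_int k"
  have Z: "Z = {z. of_real K * (z - 1)^4 + of_real K * z * (z - 1)^2 + z^2 = 0}"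
    unfolding Z_def K_def by (simp add: set_eq_iff complex_zeros_alexander_poly_2_2k_m2_m2)
  have "K \<noteq> 0" "k < 0 \<Longrightarrow> K \<le> -1" "k > 0 \<Longrightarrow> K > 0"
    using assms(1) by (auto simp: K_def)
  have "4 * K \<le> K^2 \<longleftrightarrow> 4 * k \<le> k^2"
    unfolding K_def by (metis of_int_le_iff of_int_mult of_int_numeral of_int_power)
  also have "\<dots> \<longleftrightarrow> k < 0 \<or> 4 \<le> k"
    using assms(1) by (auto simp: power2_eq_square mult_le_cancel_right)
  finally have real_or_unit: "z \<in> Z \<Longrightarrow> z \<in> \<real> \<or> cmod z = 1 \<longleftrightarrow> k < 0 \<or> 4 \<le> k" for z
    using quartic_root_real_or_unit_iff[OF \<open>K \<noteq> 0\<close>, of z] unfolding Z by simp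
  have no_real: "k > 0 \<Longrightarrow> z \<in> Z \<Longrightarrow> z \<notin> \<real>" for z
    using quartic_no_real_root[of K z] \<open>k > 0 \<Longrightarrow> K > 0\<close> unfolding Z by blast
  show ?thesis
  proof (intro conjI impI)
    assume "k < 0"
    then show "\<forall>z\<in>Z. z \<in> \<real> \<or> cmod z = 1"
      using real_or_unit by blast
    show "\<exists>z\<in>Z. z \<in> \<real>"
      using quartic_real_root_exists[of K] \<open>k < 0 \<Longrightarrow> K \<le> -1\<close> \<open>k < 0\<close> unfolding Z by force
    show "\<exists>z\<in>Z. z \<notin> \<real> \<and> cmod z = 1"
      using quartic_unit_root_exists[of K] \<open>k < 0 \<Longrightarrow> K \<le> -1\<close> \<open>k < 0\<close> unfolding Z by blast
  next
    assume "k \<in> {1, 2, 3}"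
    then show "\<forall>z\<in>Z. z \<notin> \<real> \<and> cmod z \<noteq> 1"
      using real_or_unit by auto
  next
    assume "4 \<le> k"
    then show "\<forall>z\<in>Z. cmod z = 1"
      using real_or_unit no_real by fastforce
  qed
qed

end
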